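(* Let $K$ be a field of characteristic zero, $x=(x_1,\dots,x_n)$, and let $F\in K[x]^n$ be a Keller map such that $\mathcal{J}F$ is symmetric. If for some index $i$, $F_i=c'x_i+x_i^2h+c$ for some $c,c'\in K$ and $h\in K[x]$, then $h=0$.
   Context: A Keller map is a polynomial map $F\in K[x]^n$ with $\det\mathcal{J}F\in K^{*}$, $\mathcal{J}$ the Jacobian matrix. *)

theory Defs
  imports "HOL-Library.Poly_Mapping" "Jordan_Normal_Form.Determinant"
begin

text \<open>K[x_1..x_n] is represented by the
  polynomials whose monomials only involve the variables x_0, ..., x_(n-1).\<close>

type_synonym 'a mpoly = "(nat \<Rightarrow>\<^sub>0 nat) \<Rightarrow>\<^sub>0 'a"

definition in_Kx :: "nat \<Rightarrow> 'a::zero mpoly \<Rightarrow> bool" where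
  "in_Kx n p \<longleftrightarrow> (\<forall>m \<in> Poly_Mapping.keys p. Poly_Mapping.keys m \<subseteq> {..<n})"

definition mvar :: "nat \<Rightarrow> 'a::{zero,one} mpoly" where
  "mvar i = Poly_Mapping.single (Poly_Mapping.single i 1) 1"

definition mconst :: "'a::zero \<Rightarrow> 'a mpoly" where
  "mconst c = Poly_Mapping.single 0 c"

definition mderiv :: "nat \<Rightarrow> 'a::semiring_1 mpoly \<Rightarrow> 'a mpoly" where
  "mderiv j p = Abs_poly_mapping
     (\<lambda>m::nat \<Rightarrow>\<^sub>0 nat. of_nat (Poly_Mapping.lookup m j + 1) * Poly_Mapping.lookup p (m + Poly_Mapping.single j 1))"

definition jacobian :: "nat \<Rightarrow> (nat \<Rightarrow> 'a::comm_ring_1 mpoly) \<Rightarrow> 'a mpoly mat" where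
  "jacobian n F = mat n n (\<lambda>(i, j). mderiv j (F i))"

definition keller_map :: "nat \<Rightarrow> (nat \<Rightarrow> 'a::field mpoly) \<Rightarrow> bool" where
  "keller_map n F \<longleftrightarrow> (\<forall>i<n. in_Kx n (F i)) \<and>
     (\<exists>c. c \<noteq> 0 \<and> det (jacobian n F) = mconst c)"

end

theory Submission
  imports Defs
begin

text \<open>Suppose \<open>h \<noteq> 0\<close>, let \<open>x\<^sub>i\<^sup>a\<close> be the largest power of \<open>x\<^sub>i\<close> dividing \<open>h\<close> and put
  \<open>k = a + 2\<close>. The off-diagonal entries \<open>\<partial>\<^sub>j F\<^sub>i\<close> of row \<open>i\<close> of \<open>J F\<close> lie in \<open>(x\<^sub>i\<^sup>k)\<close>, and by
  symmetry so do the \<open>x\<^sub>i\<close>-derivatives \<open>\<partial>\<^sub>i \<partial>\<^sub>s F\<^sub>r = \<partial>\<^sub>s \<partial>\<^sub>r F\<^sub>i\<close> of the entries of the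
  complementary minor; in characteristic zero that minor is therefore congruent modulo \<open>x\<^sub>i\<^sup>k\<close>
  to a polynomial \<open>D\<close> free of \<open>x\<^sub>i\<close>. Expanding along row \<open>i\<close>, the constant \<open>C = det J F\<close> is
  congruent to \<open>(c' + \<partial>\<^sub>i(x\<^sub>i\<^sup>2 h)) D\<close>. Setting \<open>x\<^sub>i = 0\<close> shows \<open>D = C/c'\<close>, so
  \<open>\<partial>\<^sub>i(x\<^sub>i\<^sup>2 h) \<in> (x\<^sub>i\<^sup>k)\<close>; but its coefficients in \<open>x\<^sub>i\<^sup>a\<^sup>+\<^sup>1\<close> are \<open>(a + 2)\<close> times the nonzero
  coefficients of \<open>h\<close> in \<open>x\<^sub>i\<^sup>a\<close>.\<close>

abbreviation lookup :: "('a \<Rightarrow>\<^sub>0 'b::zero) \<Rightarrow> 'a \<Rightarrow> 'b" where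
  "lookup \<equiv> Poly_Mapping.lookup"

lemma lookup_add_single:
  "lookup (m + Poly_Mapping.single j (v::nat)) k = lookup m k + (if j = k then v else 0)"
  by (simp add: lookup_add lookup_single when_def)

lemma lookup_single_mult_add:
  fixes p :: "'a::comm_semiring_1 mpoly"
  shows "lookup (Poly_Mapping.single s v * p) (s + m) = v * lookup p m"
proof -
  have "lookup (Poly_Mapping.single s v * p) (s + m)
      = (\<Sum>l. lookup (Poly_Mapping.single s v) l * (\<Sum>q. lookup p q when s + m = l + q))"
    by (rule lookup_mult)
  also have "\<dots> = (\<Sum>l. (v * (\<Sum>q. lookup p q when s + m = l + q)) when l = s)"
    by (rule Sum_any.cong) (auto simp: lookup_single when_def)
  also have "\<dots> = v * (\<Sum>q. lookup p q when s + m = s + q)"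
    by simp
  also have "(\<Sum>q. lookup p q when s + m = s + q) = (\<Sum>q. lookup p q when q = m)"
    by (rule Sum_any.cong) (auto simp: when_def)
  finally show ?thesis by simp
qed

lemma lookup_mconst: "lookup (mconst c) m = (if m = 0 then c else 0)"
  by (simp add: mconst_def lookup_single when_def)

lemma lookup_mconst_mult: "lookup (mconst d * p) m = d * lookup (p::'a::comm_semiring_1 mpoly) m"
  using lookup_single_mult_add[of 0 d p m] by (simp add: mconst_def)

lemma mconst_mult_mvar:
  "mconst c * mvar i = Poly_Mapping.single (Poly_Mapping.single i 1) (c::'a::comm_semiring_1)"
  by (simp add: mconst_def mvar_def mult_single)

lemma mvar_power:
  "mvar i ^ d = Poly_Mapping.single (Poly_Mapping.single i d) (1::'a::comm_semiring_1)"
  by (induction d) (simp_all add: mvar_def mult_single flip: single_add)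

lemma lookup_mderiv:
  "lookup (mderiv j p) m = of_nat (lookup m j + 1) * lookup p (m + Poly_Mapping.single j 1)"
proof -
  have "{m. of_nat (lookup m j + 1) * lookup p (m + Poly_Mapping.single j 1) \<noteq> (0::'a)}
     \<subseteq> (\<lambda>m. m + Poly_Mapping.single j 1) -` {k. lookup p k \<noteq> 0}" by auto
  moreover have "finite ((\<lambda>m. m + Poly_Mapping.single j (1::nat)) -` {k. lookup p k \<noteq> 0})"
    by (rule finite_vimageI) (auto simp: inj_def)
  ultimately show ?thesis unfolding mderiv_def
    by (subst lookup_Abs_poly_mapping) (auto intro: finite_subset)
qed

lemma mderiv_add: "mderiv j (p + q) = mderiv j p + mderiv j (q::'a::semiring_1 mpoly)"
  by (rule poly_mapping_eqI) (simp add: lookup_mderiv lookup_add distrib_left)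

lemma mderiv_commute: "mderiv j (mderiv k p) = mderiv k (mderiv j (p::'a::comm_semiring_1 mpoly))"
proof (cases "j = k")
  case False
  then show ?thesis
    by (intro poly_mapping_eqI)
      (simp add: lookup_mderiv lookup_add_single add.commute add.left_commute mult_ac)
qed simp

lemma mderiv_mconst: "mderiv j (mconst c :: 'a::semiring_1 mpoly) = 0"
proof (rule poly_mapping_eqI)
  fix m :: "nat \<Rightarrow>\<^sub>0 nat"
  have "lookup (m + Poly_Mapping.single j 1) j \<noteq> 0"
    by (simp add: lookup_add_single)
  then have "m + Poly_Mapping.single j 1 \<noteq> 0" by auto
  then show "lookup (mderiv j (mconst c)) m = lookup 0 m"
    by (simp add: lookup_mderiv lookup_mconst)
qed

lemma mderiv_mconst_mult_mvar:
  "mderiv j (mconst c * mvar i :: 'a::comm_semiring_1 mpoly) = (if j = i then mconst c else 0)"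
proof (rule poly_mapping_eqI)
  fix m :: "nat \<Rightarrow>\<^sub>0 nat"
  have "Poly_Mapping.single i 1 = m + Poly_Mapping.single j (1::nat) \<longleftrightarrow> j = i \<and> m = 0"
  proof
    assume eq: "Poly_Mapping.single i 1 = m + Poly_Mapping.single j (1::nat)"
    then have "lookup (Poly_Mapping.single i (1::nat)) j = lookup (m + Poly_Mapping.single j 1) j"
      by simp
    then have "j = i" by (simp add: lookup_add_single lookup_single when_def split: if_splits)
    with eq show "j = i \<and> m = 0" by (metis add_0 add_right_cancel)
  qed auto
  then show "lookup (mderiv j (mconst c * mvar i)) m = lookup (if j = i then mconst c else 0) m"
    by (auto simp: lookup_mderiv mconst_mult_mvar lookup_single when_def lookup_mconst)
qed

lemma lookup_mderiv_mvar_square_mult: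
  fixes h :: "'a::comm_semiring_1 mpoly"
  shows "lookup (mderiv i (mvar i ^ 2 * h)) (m + Poly_Mapping.single i 1)
    = of_nat (lookup m i + 2) * lookup h m"
proof -
  have "m + Poly_Mapping.single i 1 + Poly_Mapping.single i 1 = Poly_Mapping.single i 2 + m"
    by (simp add: add_ac numeral_2_eq_2 flip: single_add)
  then show ?thesis
    by (simp add: lookup_mderiv lookup_add_single mvar_power lookup_single_mult_add)
qed

definition var_pow_ideal :: "nat \<Rightarrow> nat \<Rightarrow> 'a::zero mpoly set" where
  "var_pow_ideal i d = {p. \<forall>m. lookup m i < d \<longrightarrow> lookup p m = 0}"

lemma zero_in_var_pow_ideal [simp]: "0 \<in> var_pow_ideal i d"
  by (simp add: var_pow_ideal_def)

lemma var_pow_ideal_add: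
  "p \<in> var_pow_ideal i d \<Longrightarrow> q \<in> var_pow_ideal i d
    \<Longrightarrow> (p::'a::monoid_add mpoly) + q \<in> var_pow_ideal i d"
  by (simp add: var_pow_ideal_def lookup_add)

lemma var_pow_ideal_diff:
  "p \<in> var_pow_ideal i d \<Longrightarrow> q \<in> var_pow_ideal i d
    \<Longrightarrow> (p::'a::ab_group_add mpoly) - q \<in> var_pow_ideal i d"
  by (simp add: var_pow_ideal_def lookup_minus)

lemma var_pow_ideal_antimono: "d \<le> d' \<Longrightarrow> p \<in> var_pow_ideal i d' \<Longrightarrow> p \<in> var_pow_ideal i d"
  by (auto simp: var_pow_ideal_def)

lemma var_pow_ideal_mult:
  fixes p q :: "'a::comm_semiring_1 mpoly"
  assumes p: "p \<in> var_pow_ideal i a" and q: "q \<in> var_pow_ideal i b"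
  shows "p * q \<in> var_pow_ideal i (a + b)"
  unfolding var_pow_ideal_def
proof (intro CollectI allI impI)
  fix m assume m: "lookup m i < a + b"
  show "lookup (p * q) m = 0"
  proof (rule ccontr)
    assume "lookup (p * q) m \<noteq> 0"
    then obtain x y where xy: "m = x + y" "x \<in> Poly_Mapping.keys p" "y \<in> Poly_Mapping.keys q"
      using keys_mult by (blast intro: in_keys_iff[THEN iffD2])
    have "a \<le> lookup x i" using p xy(2) by (force simp: var_pow_ideal_def in_keys_iff)
    moreover have "b \<le> lookup y i" using q xy(3) by (force simp: var_pow_ideal_def in_keys_iff)
    ultimately show False using m xy(1) by (simp add: lookup_add)
  qed
qed

lemma var_pow_ideal_mult_left:
  "p \<in> var_pow_ideal i d \<Longrightarrow> (q::'a::comm_semiring_1 mpoly) * p \<in> var_pow_ideal i d"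
  using var_pow_ideal_mult[of q i 0 p d] by (simp add: var_pow_ideal_def)

lemma var_pow_ideal_sum:
  fixes f :: "'b \<Rightarrow> 'a::comm_semiring_1 mpoly"
  shows "(\<And>x. x \<in> S \<Longrightarrow> f x \<in> var_pow_ideal i d) \<Longrightarrow> sum f S \<in> var_pow_ideal i d"
  by (induction S rule: infinite_finite_induct) (auto intro: var_pow_ideal_add)

lemma prod_diff_in_var_pow_ideal:
  fixes f g :: "'b \<Rightarrow> 'a::comm_ring_1 mpoly"
  assumes "finite S" "\<And>x. x \<in> S \<Longrightarrow> f x - g x \<in> var_pow_ideal i d"
  shows "prod f S - prod g S \<in> var_pow_ideal i d"
  using assms
proof (induction S rule: finite_induct)
  case (insert x S)
  have "prod f (insert x S) - prod g (insert x S)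
      = (f x - g x) * prod f S + g x * (prod f S - prod g S)"
    using insert by (simp add: algebra_simps)
  then show ?case using insert
    by (metis var_pow_ideal_add var_pow_ideal_mult_left insertCI mult.commute)
qed simp

lemma det_diff_in_var_pow_ideal:
  fixes A B :: "'a::comm_ring_1 mpoly mat"
  assumes A: "A \<in> carrier_mat n n" and B: "B \<in> carrier_mat n n"
    and entries: "\<And>r s. r < n \<Longrightarrow> s < n \<Longrightarrow> A $$ (r, s) - B $$ (r, s) \<in> var_pow_ideal i d"
  shows "det A - det B \<in> var_pow_ideal i d"
proof -
  have "det A - det B = (\<Sum>p | p permutes {0..<n}.
      signof p * ((\<Prod>r = 0..<n. A $$ (r, p r)) - (\<Prod>r = 0..<n. B $$ (r, p r))))"
    using A B unfolding det_def by (simp add: sum_subtractf[symmetric] right_diff_distrib)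
  also have "\<dots> \<in> var_pow_ideal i d"
  proof (intro var_pow_ideal_sum var_pow_ideal_mult_left prod_diff_in_var_pow_ideal)
    fix p r assume "p \<in> {p. p permutes {0..<n}}" "r \<in> {0..<n}"
    then show "A $$ (r, p r) - B $$ (r, p r) \<in> var_pow_ideal i d"
      by (auto intro: entries dest: permutes_in_image)
  qed simp
  finally show ?thesis .
qed

lemma det_minus_diag_minor_in_var_pow_ideal:
  fixes A :: "'a::comm_ring_1 mpoly mat"
  assumes A: "A \<in> carrier_mat n n" and "k < n"
    and row: "\<And>j. j < n \<Longrightarrow> j \<noteq> k \<Longrightarrow> A $$ (k, j) \<in> var_pow_ideal i d"
  shows "det A - A $$ (k, k) * det (mat_delete A k k) \<in> var_pow_ideal i d"
proof -
  have "det A = (\<Sum>j<n. A $$ (k, j) * cofactor A k j)"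
    by (rule laplace_expansion_row[OF A \<open>k < n\<close>])
  also have "\<dots> = A $$ (k, k) * cofactor A k k + (\<Sum>j\<in>{..<n} - {k}. A $$ (k, j) * cofactor A k j)"
    by (rule sum.remove) (use \<open>k < n\<close> in auto)
  finally have "det A - A $$ (k, k) * det (mat_delete A k k)
      = (\<Sum>j\<in>{..<n} - {k}. cofactor A k j * A $$ (k, j))"
    by (simp add: cofactor_def mult.commute flip: mult_2)
  also have "\<dots> \<in> var_pow_ideal i d"
    by (intro var_pow_ideal_sum var_pow_ideal_mult_left row) auto
  finally show ?thesis .
qed

lemma mderiv_in_var_pow_ideal:
  "j \<noteq> i \<Longrightarrow> p \<in> var_pow_ideal i d \<Longrightarrow> mderiv j (p::'a::semiring_1 mpoly) \<in> var_pow_ideal i d"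
  by (simp add: var_pow_ideal_def lookup_mderiv lookup_add_single)

lemma mderiv_same_in_var_pow_ideal:
  "p \<in> var_pow_ideal i (Suc d) \<Longrightarrow> mderiv i (p::'a::semiring_1 mpoly) \<in> var_pow_ideal i d"
  by (simp add: var_pow_ideal_def lookup_mderiv lookup_add_single)

lemma mvar_power_mult_in_var_pow_ideal:
  "h \<in> var_pow_ideal i a \<Longrightarrow> mvar i ^ d * (h::'a::comm_semiring_1 mpoly) \<in> var_pow_ideal i (d + a)"
  by (rule var_pow_ideal_mult) (simp_all add: mvar_power var_pow_ideal_def lookup_single when_def)

lemma nonzero_in_var_pow_ideal_lowest:
  fixes p :: "'a::zero mpoly"
  assumes "p \<noteq> 0"
  obtains m where "lookup p m \<noteq> 0" "p \<in> var_pow_ideal i (lookup m i)"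
proof -
  define a where "a = Min ((\<lambda>m. lookup m i) ` Poly_Mapping.keys p)"
  have "a \<in> (\<lambda>m. lookup m i) ` Poly_Mapping.keys p"
    unfolding a_def using assms by (intro Min_in) auto
  then obtain m where m: "m \<in> Poly_Mapping.keys p" "lookup m i = a" by auto
  have "p \<in> var_pow_ideal i a"
    unfolding var_pow_ideal_def
  proof (intro CollectI allI impI)
    fix m' assume "lookup m' i < a"
    then have "m' \<notin> Poly_Mapping.keys p"
      unfolding a_def using Min_le[of "(\<lambda>m. lookup m i) ` Poly_Mapping.keys p"] by fastforce
    then show "lookup p m' = 0" by (simp add: in_keys_iff)
  qed
  with m that show ?thesis by (simp add: in_keys_iff)
qed

definition var_free :: "nat \<Rightarrow> 'a::zero mpoly \<Rightarrow> bool" where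
  "var_free i p \<longleftrightarrow> (\<forall>m. lookup m i \<noteq> 0 \<longrightarrow> lookup p m = 0)"

definition at_var_zero :: "nat \<Rightarrow> 'a::zero mpoly \<Rightarrow> 'a mpoly" where
  "at_var_zero i p = Abs_poly_mapping (\<lambda>m. if lookup m i = 0 then lookup p m else 0)"

lemma lookup_at_var_zero: "lookup (at_var_zero i p) m = (if lookup m i = 0 then lookup p m else 0)"
proof -
  have "{m. (if lookup m i = 0 then lookup p m else 0) \<noteq> 0} \<subseteq> {m. lookup p m \<noteq> 0}" by auto
  then show ?thesis
    unfolding at_var_zero_def by (subst lookup_Abs_poly_mapping) (auto intro: finite_subset)
qed

lemma var_free_at_var_zero: "var_free i (at_var_zero i p)"
  by (simp add: var_free_def lookup_at_var_zero)

lemma var_free_mconst: "var_free i (mconst c)"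
  by (simp add: var_free_def lookup_mconst)

lemma var_free_mult:
  fixes p q :: "'a::comm_semiring_1 mpoly"
  assumes p: "var_free i p" and q: "var_free i q"
  shows "var_free i (p * q)"
  unfolding var_free_def
proof (intro allI impI)
  fix m :: "nat \<Rightarrow>\<^sub>0 nat" assume m: "lookup m i \<noteq> 0"
  show "lookup (p * q) m = 0"
  proof (rule ccontr)
    assume "lookup (p * q) m \<noteq> 0"
    then obtain x y where xy: "m = x + y" "x \<in> Poly_Mapping.keys p" "y \<in> Poly_Mapping.keys q"
      using keys_mult by (blast intro: in_keys_iff[THEN iffD2])
    have "lookup x i = 0" using p xy(2) by (force simp: var_free_def in_keys_iff)
    moreover have "lookup y i = 0" using q xy(3) by (force simp: var_free_def in_keys_iff)
    ultimately show False using m xy(1) by (simp add: lookup_add)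
  qed
qed

lemma diff_at_var_zero_in_var_pow_ideal:
  "(p::'a::ab_group_add mpoly) - at_var_zero i p \<in> var_pow_ideal i 1"
  by (simp add: var_pow_ideal_def lookup_minus lookup_at_var_zero)

lemma at_var_zero_unique:
  fixes p q :: "'a::ab_group_add mpoly"
  assumes "var_free i q" "p - q \<in> var_pow_ideal i 1"
  shows "at_var_zero i p = q"
proof (rule poly_mapping_eqI)
  fix m
  show "lookup (at_var_zero i p) m = lookup q m"
    using assms by (cases "lookup m i = 0")
      (auto simp: var_free_def var_pow_ideal_def lookup_at_var_zero lookup_minus)
qed

lemma at_var_zero_var_free: "var_free i (p::'a::ab_group_add mpoly) \<Longrightarrow> at_var_zero i p = p"
  by (rule at_var_zero_unique) auto

lemma at_var_zero_cong:
  fixes p q :: "'a::ab_group_add mpoly"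
  assumes "p - q \<in> var_pow_ideal i 1"
  shows "at_var_zero i p = at_var_zero i q"
proof (rule at_var_zero_unique)
  have "p - at_var_zero i q = (p - q) + (q - at_var_zero i q)" by simp
  also have "\<dots> \<in> var_pow_ideal i 1"
    using assms diff_at_var_zero_in_var_pow_ideal by (rule var_pow_ideal_add)
  finally show "p - at_var_zero i q \<in> var_pow_ideal i 1" .
qed (rule var_free_at_var_zero)

lemma at_var_zero_mult:
  fixes p q :: "'a::comm_ring_1 mpoly"
  shows "at_var_zero i (p * q) = at_var_zero i p * at_var_zero i q"
proof (rule at_var_zero_unique)
  have "p * q - at_var_zero i p * at_var_zero i q
      = q * (p - at_var_zero i p) + at_var_zero i p * (q - at_var_zero i q)"
    by (simp add: algebra_simps)
  also have "\<dots> \<in> var_pow_ideal i 1"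
    by (intro var_pow_ideal_add var_pow_ideal_mult_left diff_at_var_zero_in_var_pow_ideal)
  finally show "p * q - at_var_zero i p * at_var_zero i q \<in> var_pow_ideal i 1" .
qed (intro var_free_mult var_free_at_var_zero)

lemma comm_ring_hom_at_var_zero: "comm_ring_hom (at_var_zero i :: 'a::comm_ring_1 mpoly \<Rightarrow> 'a mpoly)"
proof
  show "at_var_zero i (p + q) = at_var_zero i p + at_var_zero i q" for p q :: "'a mpoly"
    by (rule poly_mapping_eqI) (simp add: lookup_at_var_zero lookup_add)
  show "at_var_zero i 1 = (1 :: 'a mpoly)"
    by (rule at_var_zero_var_free) (auto simp: var_free_def lookup_one when_def)
qed (simp_all add: at_var_zero_mult at_var_zero_var_free var_free_def)

lemma diff_at_var_zero_in_var_pow_ideal_if_mderiv: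
  fixes p :: "'a::field_char_0 mpoly"
  assumes "mderiv i p \<in> var_pow_ideal i k"
  shows "p - at_var_zero i p \<in> var_pow_ideal i k"
  unfolding var_pow_ideal_def
proof (intro CollectI allI impI)
  fix m :: "nat \<Rightarrow>\<^sub>0 nat" assume m: "lookup m i < k"
  show "lookup (p - at_var_zero i p) m = 0"
  proof (cases "lookup m i = 0")
    case False
    define m' where "m' = m - Poly_Mapping.single i 1"
    have m_eq: "m = m' + Poly_Mapping.single i 1"
      by (rule poly_mapping_eqI)
        (use False in \<open>auto simp: m'_def lookup_add lookup_minus lookup_single when_def\<close>)
    have "lookup m' i < k" using m m_eq by (simp add: lookup_add_single)
    then have "lookup (mderiv i p) m' = 0" using assms by (simp add: var_pow_ideal_def)
    then have "of_nat (lookup m' i + 1) * lookup p m = (0::'a)" by (simp add: lookup_mderiv m_eq)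
    then have "lookup p m = 0" by (simp del: of_nat_Suc)
    then show ?thesis using False by (simp add: lookup_minus lookup_at_var_zero)
  qed (simp add: lookup_minus lookup_at_var_zero)
qed

lemma in_var_pow_ideal_if_const_congruence:
  fixes q D :: "'a::field mpoly"
  assumes cong: "mconst C - (mconst c + q) * D \<in> var_pow_ideal i k"
    and "C \<noteq> 0" "0 < k" "var_free i D" "q \<in> var_pow_ideal i 1"
  shows "q \<in> var_pow_ideal i k"
proof -
  have "at_var_zero i (mconst C) = at_var_zero i ((mconst c + q) * D)"
    using cong \<open>0 < k\<close> by (intro at_var_zero_cong var_pow_ideal_antimono[of 1 k]) simp_all
  moreover have "at_var_zero i (mconst c + q) = mconst c"
    using \<open>q \<in> var_pow_ideal i 1\<close> by (intro at_var_zero_unique var_free_mconst) simp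
  ultimately have CD: "mconst C = mconst c * D"
    using \<open>var_free i D\<close> by (simp add: at_var_zero_mult at_var_zero_var_free var_free_mconst)
  have "c \<noteq> 0"
  proof
    assume "c = 0"
    then have "mconst C = 0" using CD by (simp add: mconst_def)
    with \<open>C \<noteq> 0\<close> show False by (metis lookup_mconst lookup_zero)
  qed
  have D: "D = mconst (C / c)"
  proof -
    have "D = mconst (1 / c) * (mconst c * D)"
      using \<open>c \<noteq> 0\<close> by (simp add: mconst_def mult_single mult.assoc[symmetric])
    also have "\<dots> = mconst (1 / c) * mconst C"
      by (simp only: CD)
    also have "\<dots> = mconst (C / c)"
      by (simp add: mconst_def mult_single)
    finally show ?thesis .
  qed
  have "mconst C - (mconst c + q) * D = - (mconst (C / c) * q)"
    using \<open>c \<noteq> 0\<close> by (simp add: D algebra_simps mconst_def mult_single)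
  with cong have "mconst (C / c) * q \<in> var_pow_ideal i k"
    using var_pow_ideal_diff[OF zero_in_var_pow_ideal] by fastforce
  with \<open>C \<noteq> 0\<close> \<open>c \<noteq> 0\<close> show ?thesis
    by (simp add: var_pow_ideal_def lookup_mconst_mult)
qed

lemma mderiv_swap_if_jacobian_symmetric:
  assumes "jacobian n F = transpose_mat (jacobian n F)" "r < n" "s < n"
  shows "mderiv s (F r) = mderiv r (F s)"
  using arg_cong[OF assms(1), of "\<lambda>A. A $$ (r, s)"] assms(2,3) by (simp add: jacobian_def)

lemma mat_delete_diag_entry:
  assumes "A \<in> carrier_mat n n" "r' < n - 1" "s' < n - 1"
  obtains r s where "r < n" "s < n" "r \<noteq> k" "s \<noteq> k" "mat_delete A k k $$ (r', s') = A $$ (r, s)"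
proof
  let ?r = "if r' < k then r' else Suc r'" and ?s = "if s' < k then s' else Suc s'"
  show "?r < n" "?s < n" "?r \<noteq> k" "?s \<noteq> k" using assms(2,3) by auto
  show "mat_delete A k k $$ (r', s') = A $$ (?r, ?s)"
    using assms by (simp add: mat_delete_def)
qed

lemma det_symmetric_jacobian_congruence:
  fixes F :: "nat \<Rightarrow> 'a::field_char_0 mpoly"
  assumes sym: "jacobian n F = transpose_mat (jacobian n F)" and "i < n"
    and row: "\<And>j. j < n \<Longrightarrow> j \<noteq> i \<Longrightarrow> mderiv j (F i) \<in> var_pow_ideal i k"
  shows "det (jacobian n F)
      - mderiv i (F i) * at_var_zero i (det (mat_delete (jacobian n F) i i)) \<in> var_pow_ideal i k"
proof -
  define M where "M = jacobian n F"
  define M' where "M' = mat_delete M i i"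
  have M: "M \<in> carrier_mat n n" by (simp add: M_def jacobian_def)
  have M': "M' \<in> carrier_mat (n - 1) (n - 1)" unfolding M'_def using mat_delete_carrier[OF M] .
  have "det M' - det (map_mat (at_var_zero i) M') \<in> var_pow_ideal i k"
  proof (rule det_diff_in_var_pow_ideal[OF M'])
    fix r' s' assume "r' < n - 1" "s' < n - 1"
    with M obtain r s where rs: "r < n" "s < n" "r \<noteq> i" "s \<noteq> i"
      and entry: "M' $$ (r', s') = M $$ (r, s)"
      unfolding M'_def by (rule mat_delete_diag_entry)
    have "mderiv i (M $$ (r, s)) = mderiv s (mderiv i (F r))"
      using rs by (simp add: M_def jacobian_def mderiv_commute)
    also have "\<dots> = mderiv s (mderiv r (F i))"
      using rs \<open>i < n\<close> by (simp add: mderiv_swap_if_jacobian_symmetric[OF sym])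
    also have "\<dots> \<in> var_pow_ideal i k"
      using rs by (intro mderiv_in_var_pow_ideal row)
    finally have "M $$ (r, s) - at_var_zero i (M $$ (r, s)) \<in> var_pow_ideal i k"
      by (rule diff_at_var_zero_in_var_pow_ideal_if_mderiv)
    then show "M' $$ (r', s') - map_mat (at_var_zero i) M' $$ (r', s') \<in> var_pow_ideal i k"
      using \<open>r' < n - 1\<close> \<open>s' < n - 1\<close> M' entry by simp
  qed (use M' in simp)
  then have minor: "det M' - at_var_zero i (det M') \<in> var_pow_ideal i k"
    by (simp add: comm_ring_hom.hom_det[OF comm_ring_hom_at_var_zero])
  have "det M - M $$ (i, i) * det M' \<in> var_pow_ideal i k"
    unfolding M'_def using M \<open>i < n\<close> by (rule det_minus_diag_minor_in_var_pow_ideal)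
      (use row \<open>i < n\<close> in \<open>simp add: M_def jacobian_def\<close>)
  then have "(det M - M $$ (i, i) * det M') + M $$ (i, i) * (det M' - at_var_zero i (det M'))
      \<in> var_pow_ideal i k"
    using minor by (intro var_pow_ideal_add var_pow_ideal_mult_left)
  then show ?thesis
    using \<open>i < n\<close> by (simp add: M_def M'_def algebra_simps) (simp add: jacobian_def)
qed

theorem lemma7p1:
  fixes n :: nat and F :: "nat \<Rightarrow> 'a::field_char_0 mpoly"
    and i :: nat and c c' :: 'a and h :: "'a mpoly"
  assumes "keller_map n F"
    and "jacobian n F = transpose_mat (jacobian n F)"
    and "i < n"
    and "in_Kx n h"
    and "F i = mconst c' * mvar i + (mvar i)^2 * h + mconst c"
  shows "h = 0"
proof (rule ccontr)
  assume "h \<noteq> 0"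
  then obtain m where m: "lookup h m \<noteq> 0" and "h \<in> var_pow_ideal i (lookup m i)"
    by (rule nonzero_in_var_pow_ideal_lowest)
  define k where "k = lookup m i + 2"
  define G where "G = mvar i ^ 2 * h"
  have G: "G \<in> var_pow_ideal i k"
    using mvar_power_mult_in_var_pow_ideal[OF \<open>h \<in> _\<close>, of 2] by (simp add: G_def k_def add.commute)
  have deriv_F: "mderiv j (F i) = (if j = i then mconst c' else 0) + mderiv j G" for j
    by (simp add: assms(5) G_def mderiv_add mderiv_mconst_mult_mvar mderiv_mconst)
  obtain C where "C \<noteq> 0" and det: "det (jacobian n F) = mconst C"
    using assms(1) by (auto simp: keller_map_def)
  have "mconst C - (mconst c' + mderiv i G)
      * at_var_zero i (det (mat_delete (jacobian n F) i i)) \<in> var_pow_ideal i k"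
    using det_symmetric_jacobian_congruence[OF assms(2,3), of k] G
    by (simp add: det deriv_F mderiv_in_var_pow_ideal)
  moreover have "mderiv i G \<in> var_pow_ideal i 1"
    using mderiv_same_in_var_pow_ideal[of G i 1] G by (simp add: k_def var_pow_ideal_def)
  moreover have "0 < k" by (simp add: k_def)
  ultimately have "mderiv i G \<in> var_pow_ideal i k"
    using \<open>C \<noteq> 0\<close> var_free_at_var_zero by (blast intro: in_var_pow_ideal_if_const_congruence)
  then have "lookup (mderiv i G) (m + Poly_Mapping.single i 1) = 0"
    by (simp add: var_pow_ideal_def k_def lookup_add_single)
  moreover have "lookup (mderiv i G) (m + Poly_Mapping.single i 1)
      = of_nat (lookup m i + 2) * lookup h m"
    unfolding G_def by (rule lookup_mderiv_mvar_square_mult)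
  moreover have "of_nat (lookup m i + 2) \<noteq> (0::'a)"
    by (simp only: of_nat_eq_0_iff)
  ultimately show False
    using m by simp
qed

end
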